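(* Let $\Sigma$ be an alphabet with $|\Sigma|=m$, and let $\pi_1,\pi_2,\pi_3$ be three strings, each a permutation of the symbols of $\Sigma$ (each symbol appears exactly once). Then $$|\mathrm{lcs}(\pi_1,\pi_2)|\cdot|\mathrm{lcs}(\pi_2,\pi_3)|\cdot|\mathrm{lcs}(\pi_3,\pi_1)|\ge m.$$
   Context: $\mathrm{lcs}(x,y)$ denotes a longest common subsequence of strings $x$ and $y$. *)

theory Defs
  imports Main "HOL-Library.Sublist"
begin

definition lcs_len :: "'a list \<Rightarrow> 'a list \<Rightarrow> nat" where
  "lcs_len x y = Max {length z | z. subseq z x \<and> subseq z y}"

end

theory Submission
  imports Defs
begin

text \<open>For a letter x and two strings p, q, let f(x) be the length of a longest common
  subsequence of the prefixes of p and q ending at x. It lies between 1 and lcs(p, q), and if x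
  precedes y in both p and q then f(x) < f(y), since a common subsequence ending at x extends by y.
  For two distinct letters, two of the three strings order them the same way, so the triple of
  these values for the pairs (p1, p2), (p2, p3), (p3, p1) is injective on the alphabet, which
  therefore has at most lcs(p1, p2) lcs(p2, p3) lcs(p3, p1) elements.\<close>

lemma finite_common_subseq_lengths: "finite {length z | z. subseq z x \<and> subseq z y}"
proof -
  have "{length z | z. subseq z x \<and> subseq z y} \<subseteq> length ` set (subseqs x)"
    by auto
  then show ?thesis by (rule finite_subset) simp
qed

lemma length_le_lcs_len: "subseq z x \<Longrightarrow> subseq z y \<Longrightarrow> length z \<le> lcs_len x y"
  unfolding lcs_len_def using finite_common_subseq_lengths by (intro Max_ge) auto

lemma lcs_len_attained:
  obtains z where "subseq z x" "subseq z y" "length z = lcs_len x y"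
proof -
  have "lcs_len x y \<in> {length z | z. subseq z x \<and> subseq z y}"
    unfolding lcs_len_def using finite_common_subseq_lengths by (intro Max_in) auto
  then show ?thesis using that by auto
qed

lemma lcs_len_mono: "subseq x x' \<Longrightarrow> subseq y y' \<Longrightarrow> lcs_len x y \<le> lcs_len x' y'"
proof -
  assume "subseq x x'" "subseq y y'"
  obtain z where "subseq z x" "subseq z y" "length z = lcs_len x y"
    by (rule lcs_len_attained)
  then show ?thesis
    using \<open>subseq x x'\<close> \<open>subseq y y'\<close>
    by (metis length_le_lcs_len subseq_order.order_trans)
qed

definition prefix_to :: "'a list \<Rightarrow> 'a \<Rightarrow> 'a list" where
  "prefix_to p x = takeWhile (\<lambda>y. y \<noteq> x) p @ [x]"

definition precedes :: "'a list \<Rightarrow> 'a \<Rightarrow> 'a \<Rightarrow> bool" where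
  "precedes p x y \<longleftrightarrow> x \<in> set (takeWhile (\<lambda>z. z \<noteq> y) p)"

lemma takeWhile_neq_first_occurrence:
  "x \<notin> set ys \<Longrightarrow> takeWhile (\<lambda>y. y \<noteq> x) (ys @ x # zs) = ys"
  by (induction ys) auto

lemma prefix_to_first_occurrence: "x \<notin> set ys \<Longrightarrow> prefix_to (ys @ x # zs) x = ys @ [x]"
  unfolding prefix_to_def by (simp add: takeWhile_neq_first_occurrence)

lemma prefix_prefix_to:
  assumes "x \<in> set p" shows "prefix (prefix_to p x) p"
proof -
  obtain ys zs where "p = ys @ x # zs" "x \<notin> set ys"
    using assms by (metis split_list_first)
  then show ?thesis by (simp add: prefix_to_first_occurrence)
qed

lemma precedes_prefix_to:
  assumes "precedes p x y" shows "prefix (prefix_to p x) (takeWhile (\<lambda>z. z \<noteq> y) p)"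
proof -
  obtain ys zs where split: "takeWhile (\<lambda>z. z \<noteq> y) p = ys @ x # zs" and "x \<notin> set ys"
    using assms unfolding precedes_def by (metis split_list_first)
  have "p = ys @ x # zs @ dropWhile (\<lambda>z. z \<noteq> y) p"
    by (metis split takeWhile_dropWhile_id append_assoc append_Cons)
  then have "prefix_to p x = ys @ [x]"
    using \<open>x \<notin> set ys\<close> by (metis prefix_to_first_occurrence)
  then show ?thesis using split by simp
qed

lemma precedes_total:
  assumes "x \<in> set p" "y \<in> set p" "x \<noteq> y" shows "precedes p x y \<or> precedes p y x"
proof -
  obtain ys zs where p: "p = ys @ y # zs" and "y \<notin> set ys"
    using assms(2) by (metis split_list_first)
  show ?thesis
  proof (cases "x \<in> set ys")
    case True
    then show ?thesis
      unfolding precedes_def p using \<open>y \<notin> set ys\<close> by (simp add: takeWhile_neq_first_occurrence)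
  next
    case False
    have "takeWhile (\<lambda>z. z \<noteq> x) p = ys @ y # takeWhile (\<lambda>z. z \<noteq> x) zs"
      unfolding p using False assms(3) by (subst takeWhile_append2) auto
    then show ?thesis unfolding precedes_def by simp
  qed
qed

definition lcs_ending_at :: "'a list \<Rightarrow> 'a list \<Rightarrow> 'a \<Rightarrow> nat" where
  "lcs_ending_at p q x = lcs_len (prefix_to p x) (prefix_to q x)"

lemma lcs_ending_at_pos: "0 < lcs_ending_at p q x"
proof -
  have "length [x] \<le> lcs_ending_at p q x"
    unfolding lcs_ending_at_def prefix_to_def by (intro length_le_lcs_len list_emb_append2) simp_all
  then show ?thesis by simp
qed

lemma lcs_ending_at_le_lcs_len:
  "x \<in> set p \<Longrightarrow> x \<in> set q \<Longrightarrow> lcs_ending_at p q x \<le> lcs_len p q"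
  unfolding lcs_ending_at_def by (intro lcs_len_mono prefix_imp_subseq prefix_prefix_to)

lemma lcs_ending_at_strict_mono:
  assumes "precedes p x y" "precedes q x y"
  shows "lcs_ending_at p q x < lcs_ending_at p q y"
proof -
  obtain z where z: "subseq z (prefix_to p x)" "subseq z (prefix_to q x)"
    and len: "length z = lcs_ending_at p q x"
    unfolding lcs_ending_at_def by (rule lcs_len_attained)
  have "subseq (z @ [y]) (prefix_to p y)" "subseq (z @ [y]) (prefix_to q y)"
    unfolding prefix_to_def using z precedes_prefix_to[OF assms(1)] precedes_prefix_to[OF assms(2)]
    by (auto intro!: list_emb_append_mono dest: subseq_order.order_trans)
  then have "length (z @ [y]) \<le> lcs_ending_at p q y"
    unfolding lcs_ending_at_def by (rule length_le_lcs_len)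
  then show ?thesis using len by simp
qed

lemma lcs_ending_at_neq:
  assumes "x \<in> set p" "y \<in> set p" "x \<noteq> y" "set q = set p"
    and "precedes p x y \<longleftrightarrow> precedes q x y"
  shows "lcs_ending_at p q x \<noteq> lcs_ending_at p q y"
proof (cases "precedes p x y")
  case True
  then show ?thesis using assms(5) lcs_ending_at_strict_mono[of p x y q] by simp
next
  case False
  then have "precedes p y x" "precedes q y x"
    using assms precedes_total[of x p y] precedes_total[of x q y] by auto
  then show ?thesis using lcs_ending_at_strict_mono[of p y x q] by simp
qed

lemma inj_on_lcs_ending_at_triple:
  assumes "set p2 = set p1" "set p3 = set p1"
  shows "inj_on (\<lambda>x. (lcs_ending_at p1 p2 x, lcs_ending_at p2 p3 x, lcs_ending_at p3 p1 x)) (set p1)"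
proof (rule inj_onI, rule ccontr)
  fix x y
  assume x: "x \<in> set p1" and y: "y \<in> set p1" "x \<noteq> y"
    and eq: "(lcs_ending_at p1 p2 x, lcs_ending_at p2 p3 x, lcs_ending_at p3 p1 x) =
      (lcs_ending_at p1 p2 y, lcs_ending_at p2 p3 y, lcs_ending_at p3 p1 y)"
  consider "precedes p1 x y \<longleftrightarrow> precedes p2 x y" | "precedes p2 x y \<longleftrightarrow> precedes p3 x y"
    | "precedes p3 x y \<longleftrightarrow> precedes p1 x y"
    by blast
  then show False
  proof cases
    case 1
    then have "lcs_ending_at p1 p2 x \<noteq> lcs_ending_at p1 p2 y"
      using x y assms by (intro lcs_ending_at_neq) auto
    then show False using eq by simp
  next
    case 2
    then have "lcs_ending_at p2 p3 x \<noteq> lcs_ending_at p2 p3 y"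
      using x y assms by (intro lcs_ending_at_neq) auto
    then show False using eq by simp
  next
    case 3
    then have "lcs_ending_at p3 p1 x \<noteq> lcs_ending_at p3 p1 y"
      using x y assms by (intro lcs_ending_at_neq) auto
    then show False using eq by simp
  qed
qed

theorem mainTheorem4:
  fixes \<Sigma> :: "'a set" and p1 p2 p3 :: "'a list"
  assumes "finite \<Sigma>"
    and "distinct p1" and "set p1 = \<Sigma>"
    and "distinct p2" and "set p2 = \<Sigma>"
    and "distinct p3" and "set p3 = \<Sigma>"
  shows "lcs_len p1 p2 * lcs_len p2 p3 * lcs_len p3 p1 \<ge> card \<Sigma>"
proof -
  define g where "g x = (lcs_ending_at p1 p2 x, lcs_ending_at p2 p3 x, lcs_ending_at p3 p1 x)" for x
  have "inj_on g \<Sigma>"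
    unfolding g_def using inj_on_lcs_ending_at_triple[of p2 p1 p3] assms by simp
  moreover have "g ` \<Sigma> \<subseteq> {1..lcs_len p1 p2} \<times> {1..lcs_len p2 p3} \<times> {1..lcs_len p3 p1}"
    using lcs_ending_at_pos lcs_ending_at_le_lcs_len assms
    unfolding g_def by (fastforce simp: Suc_le_eq)
  ultimately have "card \<Sigma> \<le> card ({1..lcs_len p1 p2} \<times> {1..lcs_len p2 p3} \<times> {1..lcs_len p3 p1})"
    by (metis card_image card_mono finite_cartesian_product finite_atLeastAtMost)
  then show ?thesis by (simp add: card_cartesian_product)
qed

end
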